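(* Let $r\ge1$, let $\alpha_1,\dots,\alpha_r\in(0,1)$, and let $h_1,h_{21},\dots,h_{2r}>0$. Suppose the elements of the set $$L(\underline\alpha,\underline h)=\{h_1\log p:p\in\mathbb{P}\}\cup\bigcup_{j=1}^r\{h_{2j}\log(m+\alpha_j):m\in\mathbb{N}_0\}\cup\{\pi\}$$ are linearly independent over $\mathbb{Q}$. Then the transformation $\Phi_{\underline\alpha,\underline h}(\underline\omega)=a_{\underline\alpha,\underline h}\,\underline\omega$ of $\underline\Omega$ is ergodic with respect to the Haar measure $m_H$.
   Context: Let $\gamma$ be the unit circle in $\mathbb{C}$. Define the tori $\Omega_1=\prod_{p\in\mathbb{P}}\gamma_p$ and $\Omega_2=\prod_{m\in\mathbb{N}_0}\gamma_m$, where every factor equals $\gamma$; these carry the product topology and pointwise multiplication. Put $\underline\Omega=\Omega_1\times\Omega_{21}\times\cdots\times\Omega_{2r}$ with each $\Omega_{2j}=\Omega_2$. This is a compact abelian group, and $m_H$ denotes its probability Haar measure on the Borel sets. Define the element $$a_{\underline\alpha,\underline h}=\big((p^{-ih_1}:p\in\mathbb{P}),((m+\alpha_1)^{-ih_{21}}:m\in\mathbb{N}_0),\dots,((m+\alpha_r)^{-ih_{2r}}:m\in\mathbb{N}_0)\big)\in\underline\Omega.$$ A Borel set $A$ is invariant under $\Phi$ if $A$ and $\Phi(A)$ differ by an $m_H$-null set. The transformation $\Phi$ is ergodic if every invariant set has $m_H$-measure $0$ or $1$. *)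

theory Defs
  imports "HOL-Probability.Probability"
begin

text \<open>Coordinates of the torus: Inl p for primes p (the factor Omega_1),
  Inr (j, m) for j in 1..r, m in N_0 (the factor Omega_2j).\<close>
type_synonym idx = "nat + (nat \<times> nat)"

definition torus_index :: "nat \<Rightarrow> idx set" where
  "torus_index r = Inl ` {p. prime p} \<union> Inr ` ({1..r} \<times> UNIV)"

text \<open>The torus as a subset of the product space idx => complex (product topology);
  coordinates outside the index set are fixed to 1 so that the set is closed under
  pointwise multiplication.\<close>
definition torus :: "nat \<Rightarrow> (idx \<Rightarrow> complex) set" where
  "torus r = {\<omega>. (\<forall>i\<in>torus_index r. cmod (\<omega> i) = 1) \<and> (\<forall>i. i \<notin> torus_index r \<longrightarrow> \<omega> i = 1)}"

definition haar_prob_measure :: "nat \<Rightarrow> (idx \<Rightarrow> complex) measure \<Rightarrow> bool" where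
  "haar_prob_measure r M \<longleftrightarrow> prob_space M \<and> space M = torus r \<and>
     sets M = sets (restrict_space borel (torus r)) \<and>
     (\<forall>x\<in>torus r. \<forall>A\<in>sets M. emeasure M ((\<lambda>\<omega>. (\<lambda>i. x i * \<omega> i)) ` A) = emeasure M A)"

definition a_elem :: "real \<Rightarrow> (nat \<Rightarrow> real) \<Rightarrow> (nat \<Rightarrow> real) \<Rightarrow> nat \<Rightarrow> idx \<Rightarrow> complex" where
  "a_elem h1 h2 \<alpha> r i =
     (if i \<notin> torus_index r then 1 else
      (case i of Inl p \<Rightarrow> (of_nat p :: complex) powr (- \<i> * of_real h1)
               | Inr (j, m) \<Rightarrow> (of_real (real m + \<alpha> j) :: complex) powr (- \<i> * of_real (h2 j))))"

definition ergodic_map :: "'a measure \<Rightarrow> ('a \<Rightarrow> 'a) \<Rightarrow> bool" where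
  "ergodic_map M \<Phi> \<longleftrightarrow>
     (\<forall>A\<in>sets M. emeasure M ((A - \<Phi> ` A) \<union> (\<Phi> ` A - A)) = 0 \<longrightarrow>
        measure M A = 0 \<or> measure M A = 1)"

definition rat_lin_indep :: "'i set \<Rightarrow> ('i \<Rightarrow> real) \<Rightarrow> bool" where
  "rat_lin_indep I f \<longleftrightarrow>
     (\<forall>F c. finite F \<and> F \<subseteq> I \<and> (\<Sum>i\<in>F. of_rat (c i) * f i) = 0 \<longrightarrow> (\<forall>i\<in>F. c i = 0))"

text \<open>The family L(alpha,h): None stands for pi.\<close>
definition L_family :: "real \<Rightarrow> (nat \<Rightarrow> real) \<Rightarrow> (nat \<Rightarrow> real) \<Rightarrow> idx option \<Rightarrow> real" where
  "L_family h1 h2 \<alpha> i =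
     (case i of None \<Rightarrow> pi
      | Some (Inl p) \<Rightarrow> h1 * ln (real p)
      | Some (Inr (j, m)) \<Rightarrow> h2 j * ln (real m + \<alpha> j))"

end

theory Submission
  imports Defs "HOL-Analysis.Kronecker_Approximation_Theorem" "HOL-Library.Function_Algebras"
begin

text \<open>
  For a Borel set A call S = {x. m_H(xA \<triangle> A) = 0} its a.e. stabilizer. Translation
  invariance of m_H makes S closed under products and inverses, and regularity of m_H
  (translation is continuous in measure) makes S topologically closed. If A is
  \<Phi>-invariant, then a \<in> S and hence a^k \<in> S for all k \<in> \<int>. Writing a = exp(-i L), the
  linear independence of L together with \<pi> over \<rat> lets Kronecker's theorem approximate
  any point of the torus by the powers a^k in every finite set of coordinates, i.e. in the
  product topology, so S is the whole torus. Finally, integrating 1_A(w) 1_{A^c}(xw) over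
  m_H \<otimes> m_H in both orders gives m_H(A) m_H(A^c) = 0.
\<close>

section \<open>Kronecker approximation on the circle\<close>

lemma dist_cis_le: "dist (cis a) (cis b) \<le> \<bar>a - b\<bar>"
proof -
  have "cis a - cis b = cis b * (cis (a - b) - 1)"
    by (simp add: right_diff_distrib cis_mult)
  then have "dist (cis a) (cis b) = cmod (iexp (a - b) - 1)"
    by (simp add: dist_norm norm_mult cis_conv_exp)
  also have "\<dots> = 2 * \<bar>sin ((a - b) / 2)\<bar>"
    by (rule dist_exp_i_1)
  also have "\<dots> \<le> \<bar>a - b\<bar>"
    using abs_sin_x_le_abs_x[of "(a - b) / 2"] by simp
  finally show ?thesis .
qed

lemma dist_cis_2pi_le: "dist (cis (2 * pi * s)) (cis (2 * pi * t)) \<le> 2 * pi * \<bar>s - of_int m - t\<bar>"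
proof -
  have "cis (2 * pi * s) = cis (2 * pi * (s - of_int m))"
    by (simp add: right_diff_distrib cis_multiple_2pi flip: cis_divide)
  then have "dist (cis (2 * pi * s)) (cis (2 * pi * t)) \<le> \<bar>2 * pi * (s - of_int m) - 2 * pi * t\<bar>"
    by (simp only: dist_cis_le)
  also have "\<dots> = 2 * pi * \<bar>s - of_int m - t\<bar>"
    by (simp add: abs_mult flip: right_diff_distrib)
  finally show ?thesis .
qed

lemma rat_lin_indepD:
  assumes "rat_lin_indep I f" "finite F" "F \<subseteq> I" "(\<Sum>i\<in>F. of_rat (c i) * f i) = 0" "i \<in> F"
  shows "c i = 0"
  using assms unfolding rat_lin_indep_def by blast

lemma rat_lin_indep_inj_on:
  assumes "rat_lin_indep I f"
  shows "inj_on f I"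
proof (rule inj_onI, rule ccontr)
  fix x y assume xy: "x \<in> I" "y \<in> I" "f x = f y" "x \<noteq> y"
  let ?c = "(\<lambda>_. -1 :: rat)(x := 1)"
  have sum0: "(\<Sum>i\<in>{x, y}. of_rat (?c i) * f i) = 0"
    using xy by simp
  have "?c x = 0"
    by (rule rat_lin_indepD[OF assms _ _ sum0]) (use xy in auto)
  then show False
    by simp
qed

lemma rat_lin_indep_rescale:
  assumes "rat_lin_indep I f" "inj_on \<iota> J" "\<iota> ` J \<subseteq> I" "\<forall>j\<in>J. w j \<noteq> 0" "c \<noteq> 0"
  shows "rat_lin_indep J (\<lambda>j. c * (of_rat (w j) * f (\<iota> j)))"
  unfolding rat_lin_indep_def
proof (intro allI impI ballI)
  fix F d j
  assume F: "finite F \<and> F \<subseteq> J \<and> (\<Sum>i\<in>F. of_rat (d i) * (c * (of_rat (w i) * f (\<iota> i)))) = 0"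
    and j: "j \<in> F"
  define e where "e z = d (inv_into J \<iota> z) * w (inv_into J \<iota> z)" for z
  have inj: "inj_on \<iota> F"
    using F assms(2) inj_on_subset by blast
  have e: "e (\<iota> i) = d i * w i" if "i \<in> F" for i
    using that F assms(2) by (auto simp: e_def)
  have "c * (\<Sum>z\<in>\<iota> ` F. of_rat (e z) * f z) = (\<Sum>i\<in>F. of_rat (d i) * (c * (of_rat (w i) * f (\<iota> i))))"
    by (simp add: sum.reindex[OF inj] sum_distrib_left e of_rat_mult algebra_simps cong: sum.cong)
  then have "(\<Sum>z\<in>\<iota> ` F. of_rat (e z) * f z) = 0"
    using F assms(5) by simp
  then have "e (\<iota> j) = 0"
    using F j assms(3) by (intro rat_lin_indepD[OF assms(1)]) auto
  then show "d j = 0"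
    using e[OF j] assms(4) F j by auto
qed

lemma rat_lin_indep_imp_int_independent:
  assumes "rat_lin_indep I f"
  shows "module.independent (\<lambda>r x. of_int r * x) (f ` I)"
proof -
  interpret Modules.module "\<lambda>r x. of_int r * x :: real"
    by unfold_locales (simp_all add: algebra_simps)
  show ?thesis
  proof
    assume "dependent (f ` I)"
    then obtain t u where tu: "finite t" "t \<subseteq> f ` I" "(\<Sum>v\<in>t. of_int (u v) * v) = 0"
      "\<exists>v\<in>t. u v \<noteq> 0"
      unfolding dependent_explicit by blast
    define F where "F = inv_into I f ` t"
    have inj: "inj_on f I"
      using assms by (rule rat_lin_indep_inj_on)
    have t: "t = f ` F"
      unfolding F_def using image_inv_into_cancel[OF refl tu(2)] by simp
    have FI: "F \<subseteq> I"
      using tu(2) by (auto simp: F_def inv_into_into)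
    have injF: "inj_on f F"
      using inj FI inj_on_subset by blast
    have sum0: "(\<Sum>i\<in>F. of_rat (of_int (u (f i))) * f i) = 0"
      using tu(3) by (simp add: t sum.reindex[OF injF])
    have "finite F"
      using tu(1) injF by (simp add: t finite_image_iff)
    then have "\<forall>i\<in>F. u (f i) = 0"
      using rat_lin_indepD[OF assms _ FI sum0] by simp
    then show False
      using tu(4) t by auto
  qed
qed

lemma Kronecker_cis_approx:
  fixes L :: "'i option \<Rightarrow> real" and y :: "'i \<Rightarrow> complex"
  assumes indep: "rat_lin_indep (insert None (Some ` I)) L" and L_None: "L None = pi"
    and F: "finite F" "F \<subseteq> I" and y: "\<forall>i\<in>F. cmod (y i) = 1" and e: "e > 0"
  shows "\<exists>k::int. \<forall>i\<in>F. dist (cis (of_int k * L (Some i))) (y i) < e"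
proof -
  define n where "n = card F"
  obtain g where g: "bij_betw g {0..<n} F"
    using ex_bij_betw_nat_finite[OF F(1)] unfolding n_def by blast
  define \<iota> where "\<iota> j = (if j < n then Some (g j) else None)" for j
  \<comment> \<open>The last coordinate carries \<open>L None = pi\<close> with weight 2, so that \<open>\<theta> n = 1\<close>
    as Kronecker's theorem requires.\<close>
  define w :: "nat \<Rightarrow> rat" where "w j = (if j < n then 1 else 2)" for j
  define \<theta> where "\<theta> j = 1 / (2 * pi) * (of_rat (w j) * L (\<iota> j))" for j
  have "inj_on \<iota> {..n}"
  proof (rule inj_onI)
    fix i j assume "i \<in> {..n}" "j \<in> {..n}" "\<iota> i = \<iota> j"
    then show "i = j"
      using inj_onD[OF bij_betw_imp_inj_on[OF g]] by (auto simp: \<iota>_def split: if_splits)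
  qed
  moreover have "\<iota> ` {..n} \<subseteq> insert None (Some ` I)"
    using bij_betw_apply[OF g] F(2) by (auto simp: \<iota>_def image_iff)
  ultimately have indep_\<theta>: "rat_lin_indep {..n} \<theta>"
    unfolding \<theta>_def by (rule rat_lin_indep_rescale[OF indep]) (simp_all add: w_def)
  define \<beta> where "\<beta> j = Arg (y (g j)) / (2 * pi)" for j
  have "\<theta> n = 1"
    by (simp add: \<theta>_def \<iota>_def w_def L_None)
  moreover have "e / (2 * pi) > 0"
    using e by simp
  ultimately obtain k m where km: "\<And>j. j < n \<Longrightarrow> \<bar>of_int k * \<theta> j - of_int (m j) - \<beta> j\<bar> < e / (2 * pi)"
    by (rule Kronecker_thm_2[OF rat_lin_indep_imp_int_independent[OF indep_\<theta>]
          rat_lin_indep_inj_on[OF indep_\<theta>], where \<alpha> = \<beta>]) blast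
  show ?thesis
  proof (intro exI ballI)
    fix i assume "i \<in> F"
    then have "i \<in> g ` {0..<n}"
      using bij_betw_imp_surj_on[OF g] by simp
    then obtain j where j: "j < n" "g j = i"
      by auto
    have L_eq: "of_int k * L (Some i) = 2 * pi * (of_int k * \<theta> j)"
      using j by (simp add: \<theta>_def \<iota>_def w_def)
    have "y i \<noteq> 0"
      using y \<open>i \<in> F\<close> by auto
    then have y_eq: "y i = cis (2 * pi * \<beta> j)"
      using y \<open>i \<in> F\<close> j by (simp add: \<beta>_def cis_Arg sgn_eq)
    have "dist (cis (of_int k * L (Some i))) (y i)
        \<le> 2 * pi * \<bar>of_int k * \<theta> j - of_int (m j) - \<beta> j\<bar>"
      unfolding L_eq y_eq by (rule dist_cis_2pi_le)
    also have "\<dots> < e"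
      using km[OF j(1)] pi_gt_zero by (simp add: pos_less_divide_eq mult.commute)
    finally show "dist (cis (of_int k * L (Some i))) (y i) < e" .
  qed
qed

lemma torus_norm: "x \<in> torus r \<Longrightarrow> cmod (x i) = 1"
  unfolding torus_def by (cases "i \<in> torus_index r") auto

lemma one_in_torus: "1 \<in> torus r"
  unfolding torus_def by simp

lemma torus_mult_closed: "x \<in> torus r \<Longrightarrow> y \<in> torus r \<Longrightarrow> x * y \<in> torus r"
  unfolding torus_def by (auto simp: norm_mult)

definition torus_inv :: "(idx \<Rightarrow> complex) \<Rightarrow> idx \<Rightarrow> complex" where
  "torus_inv x = (\<lambda>i. cnj (x i))"

lemma torus_inv_closed: "x \<in> torus r \<Longrightarrow> torus_inv x \<in> torus r"
  unfolding torus_def torus_inv_def by auto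

lemma torus_inv_mult: "x \<in> torus r \<Longrightarrow> torus_inv x * x = 1"
  using torus_norm[of x r] by (simp add: fun_eq_iff torus_inv_def complex_norm_square[symmetric] mult.commute)

lemma torus_mult_inv: "x \<in> torus r \<Longrightarrow> x * torus_inv x = 1"
  using torus_inv_mult by (simp add: mult.commute)

lemma torus_inv_mult_cancel: "x \<in> torus r \<Longrightarrow> torus_inv x * (x * w) = w"
  by (simp add: torus_inv_mult flip: mult.assoc)

lemma dist_torus_mult_left:
  assumes "z \<in> torus r"
  shows "dist (z * w) (z * w') = dist w w'"
proof -
  have "dist (z i * w i) (z i * w' i) = dist (w i) (w' i)" for i
    using torus_norm[OF assms, of i] by (simp add: dist_norm norm_mult flip: right_diff_distrib)
  then show ?thesis
    unfolding dist_fun_def by simp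
qed

lemma closed_torus: "closed (torus r)"
proof -
  have "torus r = (\<Inter>i\<in>torus_index r. {x. cmod (x i) = 1}) \<inter> (\<Inter>i\<in>- torus_index r. {x. x i = 1})"
    unfolding torus_def by auto
  moreover have "closed {x::idx\<Rightarrow>complex. cmod (x i) = 1}" "closed {x::idx\<Rightarrow>complex. x i = 1}" for i
    using continuous_on_product_coordinates[of i]
    by (auto intro!: closed_Collect_eq continuous_intros simp: continuous_on_eq_continuous_at)
  ultimately show ?thesis
    by (auto intro!: closed_Inter closed_Int)
qed

lemma continuous_on_torus_mult_left: "continuous_on UNIV ((*) (x :: idx \<Rightarrow> complex))"
  unfolding times_fun_def
  by (intro continuous_on_coordinatewise_then_product continuous_intros continuous_on_product_coordinates)

definition torus_exp :: "nat \<Rightarrow> (idx \<Rightarrow> real) \<Rightarrow> idx \<Rightarrow> complex" where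
  "torus_exp r \<theta> = (\<lambda>i. if i \<in> torus_index r then cis (\<theta> i) else 1)"

lemma torus_exp_in_torus: "torus_exp r \<theta> \<in> torus r"
  unfolding torus_exp_def torus_def by auto

lemma torus_exp_add: "torus_exp r (\<lambda>i. \<theta> i + \<phi> i) = torus_exp r \<theta> * torus_exp r \<phi>"
  unfolding torus_exp_def by (auto simp: fun_eq_iff cis_mult)

lemma torus_exp_uminus: "torus_exp r (\<lambda>i. - \<theta> i) = torus_inv (torus_exp r \<theta>)"
  unfolding torus_exp_def torus_inv_def by (auto simp: fun_eq_iff cis_cnj)

lemma torus_exp_zero: "torus_exp r (\<lambda>i. 0) = 1"
  unfolding torus_exp_def by (auto simp: fun_eq_iff)

lemma torus_exp_int_multiples_dense:
  assumes indep: "rat_lin_indep (insert None (Some ` torus_index r)) L" and L_None: "L None = pi"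
    and y: "y \<in> torus r" and e: "e > 0"
  shows "\<exists>k::int. dist (torus_exp r (\<lambda>i. of_int k * L (Some i))) y < e"
proof -
  obtain N :: nat where N: "(1/2) ^ N < e / 2"
    using real_arch_pow_inv[of "e/2" "1/2"] e by auto
  define F where "F = from_nat ` {..N} \<inter> torus_index r"
  obtain k :: int where k: "\<forall>i\<in>F. dist (cis (of_int k * L (Some i))) (y i) < e / 4"
    using Kronecker_cis_approx[OF indep L_None, of F y "e/4"] torus_norm[OF y] e by (auto simp: F_def)
  define x where "x = torus_exp r (\<lambda>i. of_int k * L (Some i))"
  have "dist (x (from_nat n)) (y (from_nat n)) \<le> e / 4" if "n \<le> N" for n
  proof (cases "from_nat n \<in> torus_index r")
    case True
    then have "from_nat n \<in> F"
      using that by (simp add: F_def)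
    then show ?thesis
      using k True by (simp add: x_def torus_exp_def less_imp_le)
  next
    case False
    then show ?thesis
      using y e by (simp add: x_def torus_exp_def torus_def)
  qed
  then have "Max {dist (x (from_nat n)) (y (from_nat n)) |n. n \<le> N} \<le> e / 4"
    by (intro Max.boundedI) (auto simp: setcompr_eq_image)
  then have "dist x y < e"
    using dist_fun_le_dist_first_terms[of x y N] N by linarith
  then show ?thesis
    unfolding x_def by blast
qed

section \<open>Translations and the Haar measure\<close>

lemma separate_compact_closed_metric:
  fixes K C :: "'a::metric_space set"
  assumes "compact K" "closed C" "K \<inter> C = {}"
  shows "\<exists>\<delta>>0. \<forall>x\<in>K. \<forall>y\<in>C. \<delta> \<le> dist x y"
proof (cases "K = {} \<or> C = {}")
  case True
  then show ?thesis by (intro exI[of _ 1]) auto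
next
  case False
  have "continuous_on K (\<lambda>x. infdist x C)"
    by (intro continuous_intros)
  then obtain x0 where x0: "x0 \<in> K" "\<forall>y\<in>K. infdist x0 C \<le> infdist y C"
    using continuous_attains_inf[OF assms(1)] False by blast
  have "infdist x0 C > 0"
    using infdist_pos_not_in_closed[OF assms(2)] False x0 assms(3) by blast
  then show ?thesis
    using x0 infdist_le order_trans by blast
qed

lemma image_sym_diff: "inj f \<Longrightarrow> f ` sym_diff A B = sym_diff (f ` A) (f ` B)"
  by (simp add: image_Un image_set_diff)

lemma measure_sym_diff_triangle:
  assumes "A \<in> sets M" "B \<in> sets M" "C \<in> sets M" "finite_measure M"
  shows "measure M (sym_diff A C) \<le> measure M (sym_diff A B) + measure M (sym_diff B C)"
proof -
  interpret finite_measure M by fact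
  have "measure M (sym_diff A C) \<le> measure M (sym_diff A B \<union> sym_diff B C)"
    by (rule finite_measure_mono) (use assms in auto)
  also have "\<dots> \<le> measure M (sym_diff A B) + measure M (sym_diff B C)"
    by (rule measure_Un_le) (use assms in auto)
  finally show ?thesis .
qed

lemma measure_sym_diff_eq_twice_diff:
  assumes "A \<in> sets M" "B \<in> sets M" "finite_measure M" "measure M A = measure M B"
  shows "measure M (sym_diff A B) = 2 * measure M (A - B)"
proof -
  interpret finite_measure M by fact
  have "measure M (sym_diff A B) = measure M (A - B) + measure M (B - A)"
    by (rule finite_measure_Union) (use assms in auto)
  also have "measure M (B - A) = measure M (A - B)"
    using finite_measure_Diff'[OF assms(1,2)] finite_measure_Diff'[OF assms(2,1)] assms(4)
    by (simp add: Int_commute)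
  finally show ?thesis
    by simp
qed

lemma emeasure_distr_id_restrict_borel:
  assumes "sets M = sets (restrict_space borel S)" "S \<in> sets borel" "B \<in> sets borel"
  shows "emeasure (distr M borel (\<lambda>x. x)) B = emeasure M (B \<inter> S)"
proof -
  have "(\<lambda>x. x) \<in> measurable (restrict_space borel S) borel"
    by (rule measurable_restrict_space1) simp
  then have "(\<lambda>x. x) \<in> measurable M borel"
    using measurable_cong_sets assms(1) by blast
  then have "emeasure (distr M borel (\<lambda>x. x)) B = emeasure M (space M \<inter> B)"
    by (simp add: emeasure_distr[OF _ assms(3)] Int_commute)
  moreover have "space M = S"
    using sets_eq_imp_space_eq[OF assms(1)] by (simp add: space_restrict_space)
  ultimately show ?thesis
    by (simp add: Int_commute)
qed

lemma restrict_borel_inner_approx: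
  fixes M :: "'a::{second_countable_topology, complete_space} measure"
  assumes "finite_measure M" "sets M = sets (restrict_space borel S)" "S \<in> sets borel"
    and "A \<in> sets M" "e > 0"
  shows "\<exists>K. compact K \<and> K \<subseteq> A \<and> measure M (A - K) < e"
proof (cases "measure M A < e")
  case True
  then show ?thesis
    by (intro exI[of _ "{}"]) auto
next
  case False
  interpret finite_measure M by fact
  define N where "N = distr M borel (\<lambda>x. x)"
  have A: "A \<subseteq> S" "A \<in> sets borel"
    using assms(2-4) sets.sets_into_space[OF assms(4)] sets_restrict_space_iff[of S borel]
    by (auto simp: space_restrict_space sets_eq_imp_space_eq)
  have N_eq: "emeasure N B = emeasure M (B \<inter> S)" if "B \<in> sets borel" for B
    unfolding N_def by (rule emeasure_distr_id_restrict_borel[OF assms(2,3) that])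
  have "ennreal (measure M A - e) < ennreal (measure M A)"
    using False assms(5) by (subst ennreal_less_iff) auto
  also have "\<dots> = (SUP K \<in> {K. K \<subseteq> A \<and> compact K}. emeasure N K)"
    using inner_regular[of N A] N_eq[OF A(2)] N_eq[of UNIV] A
    by (simp add: N_def Int_absorb2 emeasure_eq_measure)
  finally obtain K where K: "K \<subseteq> A" "compact K" "ennreal (measure M A - e) < emeasure N K"
    by (auto simp: less_SUP_iff)
  have "K \<in> sets borel"
    using K(2) by (simp add: compact_imp_closed borel_closed)
  then have KM: "K \<in> sets M" and "emeasure N K = measure M K"
    using N_eq K(1) A assms(2,3) sets_restrict_space_iff[of S borel]
    by (auto simp: Int_absorb2 emeasure_eq_measure)
  then have "measure M A - e < measure M K"
    using K(3) False assms(5) by (simp add: ennreal_less_iff)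
  then have "measure M (A - K) < e"
    using finite_measure_Diff[OF assms(4) KM K(1)] by simp
  then show ?thesis
    using K by blast
qed

lemma restrict_borel_outer_approx:
  fixes M :: "'a::{second_countable_topology, complete_space} measure"
  assumes "finite_measure M" "sets M = sets (restrict_space borel S)" "S \<in> sets borel"
    and "A \<in> sets M" "e > 0"
  shows "\<exists>U. open U \<and> A \<subseteq> U \<and> measure M (U \<inter> S - A) < e"
proof -
  interpret finite_measure M by fact
  define N where "N = distr M borel (\<lambda>x. x)"
  have A: "A \<subseteq> S" "A \<in> sets borel"
    using assms(2-4) sets.sets_into_space[OF assms(4)] sets_restrict_space_iff[of S borel]
    by (auto simp: space_restrict_space sets_eq_imp_space_eq)
  have N_eq: "emeasure N B = emeasure M (B \<inter> S)" if "B \<in> sets borel" for B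
    unfolding N_def by (rule emeasure_distr_id_restrict_borel[OF assms(2,3) that])
  have "(INF U \<in> {U. A \<subseteq> U \<and> open U}. emeasure N U) = ennreal (measure M A)"
    using outer_regular[of N A] N_eq[OF A(2)] N_eq[of UNIV] A
    by (simp add: N_def Int_absorb2 emeasure_eq_measure)
  also have "\<dots> < ennreal (measure M A + e)"
    using assms(5) by (subst ennreal_less_iff) auto
  finally obtain U where U: "A \<subseteq> U" "open U" "emeasure N U < ennreal (measure M A + e)"
    by (auto simp: INF_less_iff)
  have UM: "U \<inter> S \<in> sets M"
    using U(2) assms(2,3) sets_restrict_space_iff[of S borel] by auto
  have "emeasure N U = measure M (U \<inter> S)"
    using N_eq U(2) by (simp add: emeasure_eq_measure)
  then have "measure M (U \<inter> S) < measure M A + e"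
    using U(3) by (simp add: ennreal_less_iff)
  moreover have "measure M (U \<inter> S - A) = measure M (U \<inter> S) - measure M A"
    by (rule finite_measure_Diff[OF UM assms(4)]) (use U(1) A(1) in auto)
  ultimately show ?thesis
    using U by auto
qed

lemma haar_prob_measureD:
  assumes "haar_prob_measure r M"
  shows "prob_space M" and "space M = torus r" and "sets M = sets (restrict_space borel (torus r))"
    and "x \<in> torus r \<Longrightarrow> A \<in> sets M \<Longrightarrow> emeasure M ((*) x ` A) = emeasure M A"
proof -
  have "(\<lambda>\<omega> i. x i * \<omega> i) = (*) x"
    by (simp add: fun_eq_iff)
  then show "prob_space M" "space M = torus r" "sets M = sets (restrict_space borel (torus r))"
    "x \<in> torus r \<Longrightarrow> A \<in> sets M \<Longrightarrow> emeasure M ((*) x ` A) = emeasure M A"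
    using assms unfolding haar_prob_measure_def by metis+
qed

lemma sets_haar_iff:
  assumes "haar_prob_measure r M"
  shows "S \<in> sets M \<longleftrightarrow> S \<subseteq> torus r \<and> S \<in> sets borel"
  using haar_prob_measureD(3)[OF assms] sets_restrict_space_iff[of "torus r" borel] closed_torus
  by auto

lemma image_torus_mult_eq_vimage:
  assumes "x \<in> torus r" "S \<subseteq> torus r"
  shows "(*) x ` S = (*) (torus_inv x) -` S \<inter> torus r"
proof (intro set_eqI iffI)
  fix w assume "w \<in> (*) x ` S"
  then show "w \<in> (*) (torus_inv x) -` S \<inter> torus r"
    using assms torus_mult_closed torus_inv_mult_cancel by auto
next
  fix w assume w: "w \<in> (*) (torus_inv x) -` S \<inter> torus r"
  have "w = x * (torus_inv x * w)"
    using torus_mult_inv[OF assms(1)] by (simp flip: mult.assoc)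
  then show "w \<in> (*) x ` S"
    using w by blast
qed

lemma inj_torus_mult: "x \<in> torus r \<Longrightarrow> inj ((*) x)"
  by (metis injI torus_inv_mult_cancel)

lemma haar_translate_in_sets:
  assumes "haar_prob_measure r M" "x \<in> torus r" "S \<in> sets M"
  shows "(*) x ` S \<in> sets M"
proof -
  have S: "S \<subseteq> torus r" "S \<in> sets borel"
    using assms sets_haar_iff by blast+
  have "(*) (torus_inv x) -` S \<in> sets borel"
    using borel_measurable_continuous_onI[OF continuous_on_torus_mult_left] S(2)
    by (metis measurable_sets space_borel vimage_Int Int_UNIV_right inf_top.right_neutral)
  then show ?thesis
    using image_torus_mult_eq_vimage[OF assms(2) S(1)] sets_haar_iff[OF assms(1)] closed_torus by auto
qed

lemma measure_haar_translate:
  assumes "haar_prob_measure r M" "x \<in> torus r" "S \<in> sets M"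
  shows "measure M ((*) x ` S) = measure M S"
  using haar_prob_measureD(4)[OF assms(1) assms(2,3)] by (simp add: measure_def)

lemma measure_haar_translate_sym_diff:
  assumes "haar_prob_measure r M" "x \<in> torus r" "S \<in> sets M" "S' \<in> sets M"
  shows "measure M (sym_diff ((*) x ` S) ((*) x ` S')) = measure M (sym_diff S S')"
  using measure_haar_translate[OF assms(1,2), of "sym_diff S S'"] assms(3,4)
  by (simp add: image_sym_diff[OF inj_torus_mult[OF assms(2)]])

lemma dist_torus_mult_one:
  assumes "z \<in> torus r" "w \<in> torus r"
  shows "dist (z * w) w = dist z 1"
  using dist_torus_mult_left[OF assms(2), of z 1] by (simp add: mult.commute)

lemma torus_translate_diff_subset:
  assumes A: "A \<subseteq> torus r" and "K \<subseteq> A" and z: "z \<in> torus r"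
    and sep: "\<forall>x\<in>K. \<forall>y\<in>- U. \<delta> \<le> dist x y" and "dist z 1 < \<delta>"
  shows "(*) z ` A - A \<subseteq> (*) z ` (A - K) \<union> (U \<inter> torus r - A)"
proof
  fix w assume "w \<in> (*) z ` A - A"
  then obtain a where a: "a \<in> A" "w = z * a" "w \<notin> A"
    by auto
  have "a \<in> K \<Longrightarrow> w \<in> U"
    using sep \<open>dist z 1 < \<delta>\<close> dist_torus_mult_one[OF z, of a] a A by (force simp: dist_commute)
  moreover have "w \<in> torus r"
    using a A z torus_mult_closed by auto
  ultimately show "w \<in> (*) z ` (A - K) \<union> (U \<inter> torus r - A)"
    using a by auto
qed

lemma haar_translate_continuous_at_one:
  assumes M: "haar_prob_measure r M" and A: "A \<in> sets M" and e: "e > 0"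
  shows "\<exists>\<delta>>0. \<forall>z\<in>torus r. dist z 1 < \<delta> \<longrightarrow> measure M (sym_diff ((*) z ` A) A) < e"
proof -
  interpret prob_space M
    using haar_prob_measureD(1)[OF M] .
  note approx = haar_prob_measureD(3)[OF M] borel_closed[OF closed_torus] A
  obtain K where K: "compact K" "K \<subseteq> A" "measure M (A - K) < e / 4"
    using restrict_borel_inner_approx[OF finite_measure_axioms approx, of "e / 4"] e by auto
  obtain U where U: "open U" "A \<subseteq> U" "measure M (U \<inter> torus r - A) < e / 4"
    using restrict_borel_outer_approx[OF finite_measure_axioms approx, of "e / 4"] e by auto
  obtain \<delta> where \<delta>: "\<delta> > 0" "\<forall>x\<in>K. \<forall>y\<in>- U. \<delta> \<le> dist x y"
    using separate_compact_closed_metric[OF K(1), of "- U"] U K(2) by auto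
  have A_torus: "A \<subseteq> torus r"
    using A sets_haar_iff[OF M] by blast
  have KM: "K \<in> sets M" and UM: "U \<inter> torus r \<in> sets M"
    using K(1,2) U(1) A_torus sets_haar_iff[OF M] closed_torus
    by (auto simp: compact_imp_closed borel_closed)
  show ?thesis
  proof (intro exI[of _ \<delta>] conjI ballI impI \<delta>(1))
    fix z assume z: "z \<in> torus r" "dist z 1 < \<delta>"
    have zA: "(*) z ` A \<in> sets M" and zAK: "(*) z ` (A - K) \<in> sets M"
      using haar_translate_in_sets[OF M z(1)] A KM by auto
    have "(*) z ` A - A \<subseteq> (*) z ` (A - K) \<union> (U \<inter> torus r - A)"
      by (rule torus_translate_diff_subset[OF A_torus K(2) z(1) \<delta>(2) z(2)])
    then have "measure M ((*) z ` A - A) \<le> measure M ((*) z ` (A - K) \<union> (U \<inter> torus r - A))"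
      by (rule finite_measure_mono) (use zAK UM A in auto)
    also have "\<dots> \<le> measure M ((*) z ` (A - K)) + measure M (U \<inter> torus r - A)"
      by (rule measure_Un_le) (use zAK UM A in auto)
    also have "\<dots> < e / 2"
      using measure_haar_translate[OF M z(1), of "A - K"] K(3) U(3) KM A by auto
    finally show "measure M (sym_diff ((*) z ` A) A) < e"
      using measure_sym_diff_eq_twice_diff[OF zA A finite_measure_axioms]
        measure_haar_translate[OF M z(1) A] by simp
  qed
qed

section \<open>The a.e. stabilizer of a set\<close>

definition ae_stabilizer :: "'a::times measure \<Rightarrow> 'a set \<Rightarrow> 'a set" where
  "ae_stabilizer M A = {x \<in> space M. measure M (sym_diff ((*) x ` A) A) = 0}"

lemma one_in_ae_stabilizer:
  assumes "haar_prob_measure r M"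
  shows "1 \<in> ae_stabilizer M A"
  using haar_prob_measureD(2)[OF assms] one_in_torus by (simp add: ae_stabilizer_def)

lemma measure_sym_diff_translate_ae_stabilizer:
  assumes M: "haar_prob_measure r M" and A: "A \<in> sets M"
    and x: "x \<in> ae_stabilizer M A" and z: "z \<in> torus r"
  shows "measure M (sym_diff ((*) (x * z) ` A) A) \<le> measure M (sym_diff ((*) z ` A) A)"
proof -
  interpret prob_space M
    using haar_prob_measureD(1)[OF M] .
  have xT: "x \<in> torus r"
    using x haar_prob_measureD(2)[OF M] by (auto simp: ae_stabilizer_def)
  have sets: "(*) x ` A \<in> sets M" "(*) x ` ((*) z ` A) \<in> sets M" "(*) z ` A \<in> sets M"
    using haar_translate_in_sets[OF M] xT z A by auto
  have "measure M (sym_diff ((*) x ` ((*) z ` A)) A)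
      \<le> measure M (sym_diff ((*) x ` ((*) z ` A)) ((*) x ` A)) + measure M (sym_diff ((*) x ` A) A)"
    using measure_sym_diff_triangle[OF sets(2,1) A finite_measure_axioms] .
  also have "\<dots> = measure M (sym_diff ((*) z ` A) A)"
    using measure_haar_translate_sym_diff[OF M xT sets(3) A] x by (simp add: ae_stabilizer_def)
  finally show ?thesis
    by (simp add: image_image mult.assoc)
qed

lemma ae_stabilizer_mult:
  assumes M: "haar_prob_measure r M" and A: "A \<in> sets M"
    and x: "x \<in> ae_stabilizer M A" and y: "y \<in> ae_stabilizer M A"
  shows "x * y \<in> ae_stabilizer M A"
proof -
  have T: "x \<in> torus r" "y \<in> torus r"
    using x y haar_prob_measureD(2)[OF M] by (auto simp: ae_stabilizer_def)
  have "measure M (sym_diff ((*) (x * y) ` A) A) \<le> 0"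
    using measure_sym_diff_translate_ae_stabilizer[OF M A x T(2)] y by (simp add: ae_stabilizer_def)
  then show ?thesis
    using T torus_mult_closed haar_prob_measureD(2)[OF M] by (simp add: ae_stabilizer_def measure_le_0_iff)
qed

lemma ae_stabilizer_inv:
  assumes M: "haar_prob_measure r M" and A: "A \<in> sets M" and x: "x \<in> ae_stabilizer M A"
  shows "torus_inv x \<in> ae_stabilizer M A"
proof -
  have T: "x \<in> torus r" "torus_inv x \<in> torus r"
    using x haar_prob_measureD(2)[OF M] torus_inv_closed by (auto simp: ae_stabilizer_def)
  have "(*) x ` ((*) (torus_inv x) ` A) = A"
    by (simp add: image_image torus_mult_inv[OF T(1)] flip: mult.assoc)
  then have "measure M (sym_diff ((*) (torus_inv x) ` A) A) = measure M (sym_diff A ((*) x ` A))"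
    using measure_haar_translate_sym_diff[OF M T(1) haar_translate_in_sets[OF M T(2) A] A] by simp
  then show ?thesis
    using x T(2) haar_prob_measureD(2)[OF M] by (simp add: ae_stabilizer_def Un_commute)
qed

lemma torus_exp_int_mult_in_ae_stabilizer:
  assumes M: "haar_prob_measure r M" and A: "A \<in> sets M"
    and a: "torus_exp r \<theta> \<in> ae_stabilizer M A"
  shows "torus_exp r (\<lambda>i. of_int k * \<theta> i) \<in> ae_stabilizer M A"
proof -
  have nat: "torus_exp r (\<lambda>i. of_nat n * \<theta> i) \<in> ae_stabilizer M A" for n
  proof (induction n)
    case 0
    have "torus_exp r (\<lambda>i. of_nat 0 * \<theta> i) = 1"
      using torus_exp_zero by simp
    then show ?case
      using one_in_ae_stabilizer[OF M] by metis
  next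
    case (Suc n)
    then show ?case
      using ae_stabilizer_mult[OF M A a Suc] by (simp add: torus_exp_add[symmetric] algebra_simps)
  qed
  show ?thesis
  proof (cases "k \<ge> 0")
    case True
    then show ?thesis
      using nat[of "nat k"] by simp
  next
    case False
    then show ?thesis
      using ae_stabilizer_inv[OF M A nat[of "nat (- k)"]] by (simp add: torus_exp_uminus[symmetric])
  qed
qed

lemma closed_ae_stabilizer:
  assumes M: "haar_prob_measure r M" and A: "A \<in> sets M"
  shows "closed (ae_stabilizer M A)"
proof -
  have sub: "ae_stabilizer M A \<subseteq> torus r"
    using haar_prob_measureD(2)[OF M] by (auto simp: ae_stabilizer_def)
  have "y \<in> ae_stabilizer M A" if y: "y \<in> closure (ae_stabilizer M A)" for y
  proof -
    have yT: "y \<in> torus r"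
      using closure_mono[OF sub] closed_torus y by (auto simp: closure_closed)
    have "measure M (sym_diff ((*) y ` A) A) < e" if e: "e > 0" for e
    proof -
      obtain \<delta> where \<delta>: "\<delta> > 0" "\<forall>z\<in>torus r. dist z 1 < \<delta> \<longrightarrow> measure M (sym_diff ((*) z ` A) A) < e"
        using haar_translate_continuous_at_one[OF M A e] by blast
      obtain x where x: "x \<in> ae_stabilizer M A" "dist x y < \<delta>"
        using y \<delta>(1) by (auto simp: closure_approachable)
      define z where "z = torus_inv x * y"
      have xT: "x \<in> torus r" and zT: "z \<in> torus r"
        using x(1) sub yT torus_inv_closed torus_mult_closed by (auto simp: z_def)
      have "dist z 1 = dist y x"
        using dist_torus_mult_left[OF torus_inv_closed[OF xT], of y x] torus_inv_mult[OF xT]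
        by (simp add: z_def)
      then have "dist z 1 < \<delta>"
        using x(2) by (simp add: dist_commute)
      have "y = x * z"
        using torus_mult_inv[OF xT] by (simp add: z_def flip: mult.assoc)
      then have "measure M (sym_diff ((*) y ` A) A) \<le> measure M (sym_diff ((*) z ` A) A)"
        using measure_sym_diff_translate_ae_stabilizer[OF M A x(1) zT] by simp
      also have "\<dots> < e"
        using \<delta>(2) zT \<open>dist z 1 < \<delta>\<close> by blast
      finally show ?thesis .
    qed
    then have "measure M (sym_diff ((*) y ` A) A) = 0"
      using measure_nonneg[of M "sym_diff ((*) y ` A) A"] by (metis less_irrefl order_le_less)
    then show ?thesis
      using yT haar_prob_measureD(2)[OF M] by (simp add: ae_stabilizer_def)
  qed
  then show ?thesis
    using closure_subset_eq by blast
qed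

lemma ae_stabilizer_eq_torus:
  assumes M: "haar_prob_measure r M" and A: "A \<in> sets M"
    and indep: "rat_lin_indep (insert None (Some ` torus_index r)) L" and L_None: "L None = pi"
    and a: "torus_exp r (\<lambda>i. - L (Some i)) \<in> ae_stabilizer M A"
  shows "ae_stabilizer M A = torus r"
proof
  show "ae_stabilizer M A \<subseteq> torus r"
    using haar_prob_measureD(2)[OF M] by (auto simp: ae_stabilizer_def)
  show "torus r \<subseteq> ae_stabilizer M A"
  proof
    fix y assume y: "y \<in> torus r"
    have "\<exists>x\<in>ae_stabilizer M A. dist x y < e" if "e > 0" for e
    proof -
      obtain k :: int where k: "dist (torus_exp r (\<lambda>i. of_int k * L (Some i))) y < e"
        using torus_exp_int_multiples_dense[OF indep L_None y \<open>e > 0\<close>] by blast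
      have "torus_exp r (\<lambda>i. of_int (- k) * - L (Some i)) \<in> ae_stabilizer M A"
        by (rule torus_exp_int_mult_in_ae_stabilizer[OF M A a])
      then show ?thesis
        using k by auto
    qed
    then show "y \<in> ae_stabilizer M A"
      using closed_approachable[OF closed_ae_stabilizer[OF M A]] by blast
  qed
qed

section \<open>Sets invariant under all translations\<close>

lemma torus_mult_mem_iff:
  assumes "x \<in> torus r"
  shows "x * w \<in> S \<longleftrightarrow> w \<in> (*) (torus_inv x) ` S"
proof
  assume "x * w \<in> S"
  then show "w \<in> (*) (torus_inv x) ` S"
    using torus_inv_mult_cancel[OF assms, of w] by (metis image_eqI)
next
  assume "w \<in> (*) (torus_inv x) ` S"
  then show "x * w \<in> S"
    using torus_mult_inv[OF assms] by (auto simp flip: mult.assoc)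
qed

lemma measurable_torus_mult:
  assumes M: "haar_prob_measure r M"
  shows "(\<lambda>p. fst p * snd p) \<in> measurable (M \<Otimes>\<^sub>M M) M"
proof -
  have "(\<lambda>x::idx \<Rightarrow> complex. x i) \<in> borel_measurable (restrict_space borel (torus r))" for i
    by (rule measurable_restrict_space1, rule borel_measurable_continuous_onI,
        rule continuous_on_product_coordinates)
  then have coord: "(\<lambda>x. x i) \<in> borel_measurable M" for i
    using measurable_cong_sets haar_prob_measureD(3)[OF M] by blast
  have "(\<lambda>p. fst p * snd p) \<in> borel_measurable (M \<Otimes>\<^sub>M M)"
  proof (rule measurable_coordinatewise_then_product)
    fix i
    show "(\<lambda>p. (fst p * snd p) i) \<in> borel_measurable (M \<Otimes>\<^sub>M M)"
      using borel_measurable_times[OF measurable_compose[OF measurable_fst coord]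
          measurable_compose[OF measurable_snd coord]] by simp
  qed
  moreover have "(\<lambda>p. fst p * snd p) \<in> space (M \<Otimes>\<^sub>M M) \<rightarrow> torus r"
    using haar_prob_measureD(2)[OF M] torus_mult_closed by (auto simp: space_pair_measure)
  ultimately have "(\<lambda>p. fst p * snd p) \<in> measurable (M \<Otimes>\<^sub>M M) (restrict_space borel (torus r))"
    by (simp add: measurable_restrict_space2_iff)
  then show ?thesis
    using measurable_cong_sets haar_prob_measureD(3)[OF M] by blast
qed

lemma nn_integral_haar_indicator_translate:
  assumes M: "haar_prob_measure r M" and B: "B \<in> sets M" and w: "w \<in> torus r"
  shows "(\<integral>\<^sup>+ x. indicator B (x * w) \<partial>M) = emeasure M B"
proof -
  have "(\<integral>\<^sup>+ x. indicator B (x * w) \<partial>M) = (\<integral>\<^sup>+ x. indicator ((*) (torus_inv w) ` B) x \<partial>M)"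
  proof (rule nn_integral_cong)
    fix x
    have "x * w \<in> B \<longleftrightarrow> x \<in> (*) (torus_inv w) ` B"
      using torus_mult_mem_iff[OF w, of x B] by (simp only: mult.commute[of x w])
    then show "indicator B (x * w) = (indicator ((*) (torus_inv w) ` B) x :: ennreal)"
      by (simp add: indicator_def)
  qed
  also have "\<dots> = emeasure M B"
    using haar_prob_measureD(4)[OF M torus_inv_closed[OF w] B]
      haar_translate_in_sets[OF M torus_inv_closed[OF w] B] by simp
  finally show ?thesis .
qed

lemma nn_integral_haar_indicator_translate_compl:
  assumes M: "haar_prob_measure r M" and A: "A \<in> sets M"
    and x: "x \<in> torus r" "torus_inv x \<in> ae_stabilizer M A"
  shows "(\<integral>\<^sup>+ w. indicator A w * indicator (torus r - A) (x * w) \<partial>M) = 0"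
proof -
  interpret prob_space M
    using haar_prob_measureD(1)[OF M] .
  have xA: "(*) (torus_inv x) ` A \<in> sets M"
    using haar_translate_in_sets[OF M torus_inv_closed[OF x(1)] A] .
  have "(\<integral>\<^sup>+ w. indicator A w * indicator (torus r - A) (x * w) \<partial>M)
      = (\<integral>\<^sup>+ w. indicator (A - (*) (torus_inv x) ` A) w \<partial>M)"
    using x(1) haar_prob_measureD(2)[OF M] torus_mult_closed
    by (intro nn_integral_cong) (auto simp: indicator_def torus_mult_mem_iff)
  also have "\<dots> \<le> emeasure M (sym_diff ((*) (torus_inv x) ` A) A)"
    using A xA by (auto intro!: emeasure_mono)
  also have "\<dots> = 0"
    using x(2) by (simp add: ae_stabilizer_def emeasure_eq_measure)
  finally show ?thesis
    by simp
qed

lemma measure_0_or_1_if_ae_stabilizer_full: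
  assumes M: "haar_prob_measure r M" and A: "A \<in> sets M" and full: "ae_stabilizer M A = torus r"
  shows "measure M A = 0 \<or> measure M A = 1"
proof -
  interpret prob_space M
    using haar_prob_measureD(1)[OF M] .
  interpret P: pair_sigma_finite M M
    by unfold_locales
  have space: "space M = torus r"
    using haar_prob_measureD(2)[OF M] .
  define B where "B = torus r - A"
  have B: "B \<in> sets M"
    unfolding B_def using A space by (metis sets.compl_sets)
  define f :: "_ \<Rightarrow> ennreal" where "f p = indicator A (snd p) * indicator B (fst p * snd p)" for p
  have "(\<integral>\<^sup>+ w. (\<integral>\<^sup>+ x. f (x, w) \<partial>M) \<partial>M) = (\<integral>\<^sup>+ w. emeasure M B * indicator A w \<partial>M)"
    using nn_integral_haar_indicator_translate[OF M B] space
    by (intro nn_integral_cong) (auto simp: f_def indicator_def)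
  then have "emeasure M B * emeasure M A = (\<integral>\<^sup>+ w. (\<integral>\<^sup>+ x. f (x, w) \<partial>M) \<partial>M)"
    using A by (simp add: nn_integral_cmult_indicator)
  also have "\<dots> = (\<integral>\<^sup>+ x. (\<integral>\<^sup>+ w. f (x, w) \<partial>M) \<partial>M)"
    by (rule P.Fubini) (unfold f_def, use measurable_torus_mult[OF M] A B in measurable)
  also have "\<dots> = (\<integral>\<^sup>+ x. 0 \<partial>M)"
    using nn_integral_haar_indicator_translate_compl[OF M A] full space torus_inv_closed
    by (intro nn_integral_cong) (simp add: f_def B_def)
  finally have "measure M B = 0 \<or> measure M A = 0"
    by (simp add: emeasure_eq_measure)
  moreover have "measure M B = 1 - measure M A"
    unfolding B_def using prob_compl[OF A] space by simp
  ultimately show ?thesis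
    by auto
qed

lemma powr_imaginary_eq_cis:
  assumes "x > 0"
  shows "complex_of_real x powr (- \<i> * complex_of_real h) = cis (- (h * ln x))"
  using assms by (simp add: powr_def Ln_of_real cis_conv_exp algebra_simps)

lemma a_elem_eq_torus_exp:
  assumes "\<forall>j\<in>{1..r}. 0 < \<alpha> j"
  shows "a_elem h1 h2 \<alpha> r = torus_exp r (\<lambda>i. - L_family h1 h2 \<alpha> (Some i))"
proof
  fix i
  show "a_elem h1 h2 \<alpha> r i = torus_exp r (\<lambda>i. - L_family h1 h2 \<alpha> (Some i)) i"
  proof (cases "i \<in> torus_index r")
    case False
    then show ?thesis
      by (simp add: a_elem_def torus_exp_def)
  next
    case True
    show ?thesis
    proof (cases i)
      case (Inl p)
      then have "real p > 0"
        using True by (auto simp: torus_index_def prime_gt_0_nat)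
      then show ?thesis
        using True Inl powr_imaginary_eq_cis[of "real p" h1]
        by (simp add: a_elem_def torus_exp_def L_family_def)
    next
      case (Inr jm)
      then obtain j m where jm: "i = Inr (j, m)" "j \<in> {1..r}"
        using True by (auto simp: torus_index_def)
      then have "real m + \<alpha> j > 0"
        using assms by (simp add: add_nonneg_pos)
      then show ?thesis
        using True jm powr_imaginary_eq_cis[of "real m + \<alpha> j" "h2 j"]
        by (simp add: a_elem_def torus_exp_def L_family_def)
    qed
  qed
qed

theorem lemma2:
  fixes r :: nat and \<alpha> h2 :: "nat \<Rightarrow> real" and h1 :: real
    and M :: "(idx \<Rightarrow> complex) measure"
  assumes "r \<ge> 1"
    and "\<forall>j\<in>{1..r}. 0 < \<alpha> j \<and> \<alpha> j < 1"
    and "h1 > 0" and "\<forall>j\<in>{1..r}. h2 j > 0"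
    and "rat_lin_indep (insert None (Some ` torus_index r)) (L_family h1 h2 \<alpha>)"
    and "haar_prob_measure r M"
  shows "ergodic_map M (\<lambda>\<omega>. (\<lambda>i. a_elem h1 h2 \<alpha> r i * \<omega> i))"
proof -
  let ?a = "torus_exp r (\<lambda>i. - L_family h1 h2 \<alpha> (Some i))"
  have \<Phi>: "(\<lambda>\<omega> i. a_elem h1 h2 \<alpha> r i * \<omega> i) = (*) ?a"
    using a_elem_eq_torus_exp[of r \<alpha>] assms(2) by (simp add: fun_eq_iff)
  show ?thesis
    unfolding ergodic_map_def \<Phi>
  proof (intro ballI impI)
    fix A assume A: "A \<in> sets M" and "emeasure M (sym_diff A ((*) ?a ` A)) = 0"
    then have "?a \<in> ae_stabilizer M A"
      using torus_exp_in_torus haar_prob_measureD(2)[OF assms(6)]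
      by (simp add: ae_stabilizer_def measure_def Un_commute)
    moreover have "L_family h1 h2 \<alpha> None = pi"
      by (simp add: L_family_def)
    ultimately have "ae_stabilizer M A = torus r"
      using ae_stabilizer_eq_torus[OF assms(6) A assms(5)] by blast
    then show "measure M A = 0 \<or> measure M A = 1"
      by (rule measure_0_or_1_if_ae_stabilizer_full[OF assms(6) A])
  qed
qed

end
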